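(* Consider a sequence of problems indexed by $n$ with a fixed integer $m\ge1$, a support set $\mathcal{S}\subseteq\{1,\dots,n\}$ of size $s=s(n)$, a fixed rate $\theta_1>0$ and a rate $\theta_0=\theta_0(n)>\theta_1$. Observations of component $i$ are i.i.d. $\mathrm{Poisson}(\theta_0)$ if $i\notin\mathcal{S}$ and i.i.d. $\mathrm{Poisson}(\theta_1)$ if $i\in\mathcal{S}$, independent across components and draws. Run (reversed) sequential thresholding with $K=(1+\epsilon)\log_2 n$ passes, $\epsilon>0$: set $\mathcal{S}_0=\{1,\dots,n\}$; for $k=1,\dots,K$, for each $i\in\mathcal{S}_{k-1}$ take $m$ fresh observations, compute $T^{(k)}_{i,m}=\sum_{j=1}^m y^{(k)}_{i,j}$, and set $\mathcal{S}_k=\{i\in\mathcal{S}_{k-1}:T^{(k)}_{i,m}<\mathrm{median}(\mathrm{Poisson}(m\theta_0))\}$. If $\theta_0>\frac{\log(s\log_2 n)+1}{m}$, then sequential thresholding is reliable, i.e. $\lim_{n\to\infty}\mathbb{P}(\mathcal{S}_K\neq\mathcal{S})=0$.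
   Context: A support estimator $\widehat{\mathcal{S}}(n)$ is reliable if $\lim_{n\to\infty}\mathbb{P}(\widehat{\mathcal{S}}(n)\neq\mathcal{S}(n))=0$. The inequality on $\theta_0$ is understood as a condition on the growth of $\theta_0(n)$ with $n$. *)

theory Defs
  imports "HOL-Probability.Probability"
begin

definition poisson_median :: "real \<Rightarrow> nat" where
  "poisson_median r = (LEAST M::nat. measure_pmf.prob (poisson_pmf r) {..M} \<ge> 1/2)"

text \<open>Observations: y (k, i, j) is the j-th observation of component i in pass k.
  Sequential thresholding: S_0 = {1..n}, and
  S_k = {i \<in> S_(k-1). (\<Sum>j=1..m. y(k,i,j)) < thr}.\<close>
fun seq_thresh :: "nat \<Rightarrow> nat \<Rightarrow> nat \<Rightarrow> (nat \<times> nat \<times> nat \<Rightarrow> nat) \<Rightarrow> nat \<Rightarrow> nat set" where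
  "seq_thresh n m thr y 0 = {1..n}"
| "seq_thresh n m thr y (Suc k) =
     {i \<in> seq_thresh n m thr y k. (\<Sum>j=1..m. y (Suc k, i, j)) < thr}"

definition obs_pmf ::
  "nat \<Rightarrow> nat \<Rightarrow> nat \<Rightarrow> nat set \<Rightarrow> real \<Rightarrow> real \<Rightarrow> (nat \<times> nat \<times> nat \<Rightarrow> nat) pmf" where
  "obs_pmf n m K S theta0 theta1 =
     Pi_pmf ({1..K} \<times> {1..n} \<times> {1..m}) 0
       (\<lambda>(k, i, j). poisson_pmf (if i \<in> S then theta1 else theta0))"

end

theory Submission
  imports Defs "HOL-Real_Asymp.Real_Asymp"
begin

text \<open>
  A null component survives a pass with probability at most 1/2, because the threshold is the
  median of its Poisson(m theta0) statistic; after K = ceil((1 + eps) log2 n) passes the null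
  components contribute at most n 2^(-K) <= n^(-eps) to the error probability. A support
  component is lost in a pass only if its Poisson(m theta1) statistic reaches the median M,
  which happens with probability at most (m theta1)^M / M!. A Chernoff-type bound gives
  exp (m theta0 / 2) <= 2^(M + 1), so the growth condition forces s K = O(4^M) and M --> \<infinity>;
  the union bound s K (m theta1)^M / M! = O((4 m theta1)^M / M!) therefore tends to 0.
\<close>

lemma power_over_fact_tendsto_zero:
  fixes x :: real
  shows "(\<lambda>n. x ^ n / fact n) \<longlonglongrightarrow> 0"
  using summable_exp[of x] by (intro summable_LIMSEQ_zero) (simp add: inverse_eq_divide field_simps)

lemma sum_power_over_fact_le_exp:
  fixes x :: real
  assumes "x \<ge> 0"
  shows "(\<Sum>k<n. x ^ k / fact k) \<le> exp x"
proof -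
  obtain t where "exp x = (\<Sum>k<n. x ^ k / fact k) + exp t / fact n * x ^ n"
    using Maclaurin_exp_le[of x n] by blast
  moreover have "exp t / fact n * x ^ n \<ge> 0"
    using assms by simp
  ultimately show ?thesis
    by linarith
qed

lemma poisson_pmf_add:
  assumes "a > 0" "b > 0"
  shows "map_pmf (\<lambda>(x, y). x + y) (pair_pmf (poisson_pmf a) (poisson_pmf b)) = poisson_pmf (a + b)"
proof (rule pmf_eqI)
  fix n :: nat
  have preimage: "(\<lambda>(x, y). x + y) -` {n} = (\<lambda>k. (k, n - k)) ` {..n}"
    by (force simp: image_iff)
  have inj: "inj_on (\<lambda>k. (k, n - k)) {..n}"
    by (auto simp: inj_on_def)
  have "pmf (map_pmf (\<lambda>(x, y). x + y) (pair_pmf (poisson_pmf a) (poisson_pmf b))) n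
      = (\<Sum>k\<le>n. a ^ k / fact k * exp (-a) * (b ^ (n - k) / fact (n - k) * exp (-b)))"
    unfolding pmf_map preimage using assms
    by (subst measure_measure_pmf_finite) (simp_all add: sum.reindex[OF inj] pmf_pair)
  also have "\<dots> = exp (-(a + b)) / fact n * (\<Sum>k\<le>n. real (n choose k) * a ^ k * b ^ (n - k))"
    unfolding sum_distrib_left
  proof (rule sum.cong[OF refl])
    fix k assume "k \<in> {..n}"
    then have "real (n choose k) = fact n / (fact k * fact (n - k))"
      by (simp add: binomial_fact)
    then show "a ^ k / fact k * exp (-a) * (b ^ (n - k) / fact (n - k) * exp (-b))
       = exp (-(a + b)) / fact n * (real (n choose k) * a ^ k * b ^ (n - k))"
      by (simp add: field_simps exp_diff exp_minus)
  qed
  also have "\<dots> = pmf (poisson_pmf (a + b)) n"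
    using assms by (simp add: binomial_ring atLeast0AtMost)
  finally show "pmf (map_pmf (\<lambda>(x, y). x + y) (pair_pmf (poisson_pmf a) (poisson_pmf b))) n
      = pmf (poisson_pmf (a + b)) n" .
qed

lemma Pi_pmf_poisson_sum:
  assumes "finite J" "J \<noteq> {}" "\<And>j. j \<in> J \<Longrightarrow> \<theta> j > 0"
  shows "map_pmf (\<lambda>w. \<Sum>j\<in>J. w j) (Pi_pmf J d (\<lambda>j. poisson_pmf (\<theta> j)))
       = poisson_pmf (\<Sum>j\<in>J. \<theta> j)"
  using assms
proof (induction J rule: finite_ne_induct)
  case (singleton x)
  show ?case
    by (simp add: Pi_pmf_singleton pmf.map_comp o_def)
next
  case (insert x F)
  have "map_pmf (\<lambda>w. \<Sum>j\<in>insert x F. w j) (Pi_pmf (insert x F) d (\<lambda>j. poisson_pmf (\<theta> j)))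
      = map_pmf (\<lambda>(y, z). y + z)
          (pair_pmf (poisson_pmf (\<theta> x)) (map_pmf (\<lambda>w. \<Sum>j\<in>F. w j) (Pi_pmf F d (\<lambda>j. poisson_pmf (\<theta> j)))))"
    using insert.hyps
    by (subst Pi_pmf_insert) (auto simp: pmf.map_comp o_def case_prod_unfold pair_map_pmf2
        intro!: pmf.map_cong sum.cong)
  also have "\<dots> = poisson_pmf (\<theta> x + (\<Sum>j\<in>F. \<theta> j))"
    using insert by (simp add: poisson_pmf_add sum_pos)
  finally show ?case
    using insert.hyps by simp
qed

lemma Pi_pmf_curry:
  assumes "finite I" "finite J"
  shows "map_pmf (\<lambda>z a b. z (a, b)) (Pi_pmf (I \<times> J) d p)
       = Pi_pmf I (\<lambda>_. d) (\<lambda>a. Pi_pmf J d (\<lambda>b. p (a, b)))"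
proof (rule pmf_eqI)
  fix F :: "'a \<Rightarrow> 'b \<Rightarrow> 'c"
  have "inj (\<lambda>z a b. z (a, b))"
    by (auto simp: inj_def fun_eq_iff)
  then have "pmf (map_pmf (\<lambda>z a b. z (a, b)) (Pi_pmf (I \<times> J) d p)) F
      = pmf (Pi_pmf (I \<times> J) d p) (case_prod F)"
    using pmf_map_inj'[of "\<lambda>z a b. z (a, b)" _ "case_prod F"] by simp
  also have "\<dots> = pmf (Pi_pmf I (\<lambda>_. d) (\<lambda>a. Pi_pmf J d (\<lambda>b. p (a, b)))) F"
  proof (cases "\<forall>a b. (a, b) \<notin> I \<times> J \<longrightarrow> F a b = d")
    case True
    then have "pmf (Pi_pmf (I \<times> J) d p) (case_prod F)
        = (\<Prod>a\<in>I. \<Prod>b\<in>J. pmf (p (a, b)) (F a b))"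
      using assms by (subst pmf_Pi) (auto simp: prod.cartesian_product intro!: prod.cong)
    also have "\<dots> = pmf (Pi_pmf I (\<lambda>_. d) (\<lambda>a. Pi_pmf J d (\<lambda>b. p (a, b)))) F"
      using True assms by (subst pmf_Pi) (auto simp: pmf_Pi fun_eq_iff intro!: prod.cong)
    finally show ?thesis .
  next
    case False
    then obtain a b where ab: "(a, b) \<notin> I \<times> J" "F a b \<noteq> d"
      by auto
    have "pmf (Pi_pmf (I \<times> J) d p) (case_prod F) = 0"
      using ab assms by (intro pmf_Pi_outside) auto
    moreover have "pmf (Pi_pmf I (\<lambda>_. d) (\<lambda>a. Pi_pmf J d (\<lambda>b. p (a, b)))) F = 0"
    proof (cases "a \<in> I")
      case True
      then show ?thesis
        using ab assms by (subst pmf_Pi) (auto intro!: prod_zero bexI[of _ a] pmf_Pi_outside)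
    next
      case False
      then show ?thesis
        using ab assms by (intro pmf_Pi_outside) (auto simp: fun_eq_iff)
    qed
    ultimately show ?thesis
      by simp
  qed
  finally show "pmf (map_pmf (\<lambda>z a b. z (a, b)) (Pi_pmf (I \<times> J) d p)) F
      = pmf (Pi_pmf I (\<lambda>_. d) (\<lambda>a. Pi_pmf J d (\<lambda>b. p (a, b)))) F" .
qed

lemma Pi_pmf_row:
  assumes "finite I" "finite J" "a \<in> I"
  shows "map_pmf (\<lambda>z b. z (a, b)) (Pi_pmf (I \<times> J) d p) = Pi_pmf J d (\<lambda>b. p (a, b))"
proof -
  have "map_pmf (\<lambda>z b. z (a, b)) (Pi_pmf (I \<times> J) d p)
      = map_pmf (\<lambda>f. f a) (map_pmf (\<lambda>z a b. z (a, b)) (Pi_pmf (I \<times> J) d p))"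
    by (simp add: pmf.map_comp o_def)
  also have "\<dots> = Pi_pmf J d (\<lambda>b. p (a, b))"
    using assms by (simp add: Pi_pmf_curry Pi_pmf_component)
  finally show ?thesis .
qed

lemma seq_thresh_eq:
  "seq_thresh n m thr y K = {i \<in> {1..n}. \<forall>k\<in>{1..K}. (\<Sum>j=1..m. y (k, i, j)) < thr}"
  by (induction K) (auto simp: le_Suc_eq)

lemma prob_seq_thresh_keeps:
  assumes "i \<in> {1..n}" "m \<ge> 1" "\<theta>0 > 0" "\<theta>1 > 0"
  shows "measure_pmf.prob (obs_pmf n m K S \<theta>0 \<theta>1) {y. i \<in> seq_thresh n m thr y K}
       = measure_pmf.prob (poisson_pmf (real m * (if i \<in> S then \<theta>1 else \<theta>0))) {..<thr} ^ K"
proof -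
  define p where "p = (\<lambda>(i, j::nat). poisson_pmf (if i \<in> S then \<theta>1 else \<theta>0))"
  define pass where "pass = Pi_pmf ({1..n} \<times> {1..m}) 0 p"
  define keep where "keep = {w. (\<Sum>j=1..m. w (i, j)) < thr}"
  have "map_pmf (\<lambda>w. \<Sum>j=1..m. w (i, j)) pass
      = map_pmf (\<lambda>v. \<Sum>j\<in>{1..m}. v j) (map_pmf (\<lambda>w j. w (i, j)) pass)"
    by (simp add: pmf.map_comp o_def)
  also have "\<dots> = poisson_pmf (real m * (if i \<in> S then \<theta>1 else \<theta>0))"
    using assms by (simp add: pass_def Pi_pmf_row p_def Pi_pmf_poisson_sum)
  finally have pass_statistic: "map_pmf (\<lambda>w. \<Sum>j=1..m. w (i, j)) pass
      = poisson_pmf (real m * (if i \<in> S then \<theta>1 else \<theta>0))" .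
  have event: "{y. i \<in> seq_thresh n m thr y K} = (\<lambda>z k ij. z (k, ij)) -` Pi {1..K} (\<lambda>_. keep)"
    using assms(1) by (auto simp: seq_thresh_eq keep_def)
  have passes:
    "map_pmf (\<lambda>z k ij. z (k, ij)) (obs_pmf n m K S \<theta>0 \<theta>1) = Pi_pmf {1..K} (\<lambda>_. 0) (\<lambda>_. pass)"
    unfolding obs_pmf_def pass_def by (simp add: Pi_pmf_curry p_def case_prod_unfold)
  have "measure_pmf.prob (obs_pmf n m K S \<theta>0 \<theta>1) {y. i \<in> seq_thresh n m thr y K}
      = measure_pmf.prob (Pi_pmf {1..K} (\<lambda>_. 0) (\<lambda>_. pass)) (Pi {1..K} (\<lambda>_. keep))"
    unfolding event passes[symmetric] by simp
  also have "\<dots> = measure_pmf.prob pass keep ^ K"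
    by (simp add: measure_Pi_pmf_Pi)
  also have "measure_pmf.prob pass keep
      = measure_pmf.prob (poisson_pmf (real m * (if i \<in> S then \<theta>1 else \<theta>0))) {..<thr}"
    unfolding pass_statistic[symmetric] keep_def by (simp add: vimage_def)
  finally show ?thesis .
qed

lemma prob_poisson_lessThan:
  assumes "r > 0"
  shows "measure_pmf.prob (poisson_pmf r) {..<M} = exp (-r) * (\<Sum>k<M. r ^ k / fact k)"
  using assms by (simp add: measure_measure_pmf_finite sum_distrib_left mult_ac)

lemma prob_poisson_atLeast:
  "measure_pmf.prob (poisson_pmf r) {M..} = 1 - measure_pmf.prob (poisson_pmf r) {..<M}"
  using measure_pmf.prob_compl[of "{..<M}" "poisson_pmf r"]
  by (simp add: Compl_eq_Diff_UNIV[symmetric])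

lemma prob_poisson_atLeast_le:
  assumes "r > 0"
  shows "measure_pmf.prob (poisson_pmf r) {M..} \<le> r ^ M / fact M"
proof -
  obtain t where t: "\<bar>t\<bar> \<le> \<bar>r\<bar>" "exp r = (\<Sum>k<M. r ^ k / fact k) + exp t / fact M * r ^ M"
    using Maclaurin_exp_le[of r M] by blast
  have "measure_pmf.prob (poisson_pmf r) {M..} = exp (-r) * (exp r - (\<Sum>k<M. r ^ k / fact k))"
    using assms by (simp add: prob_poisson_atLeast prob_poisson_lessThan algebra_simps exp_minus)
  also have "\<dots> = exp (-r) * exp t * (r ^ M / fact M)"
    using t(2) by simp
  also have "\<dots> \<le> exp (-r) * exp r * (r ^ M / fact M)"
    using t(1) assms by (intro mult_right_mono mult_left_mono) auto
  finally show ?thesis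
    by (simp add: exp_minus)
qed

lemma prob_poisson_less_median: "measure_pmf.prob (poisson_pmf r) {..<poisson_median r} \<le> 1/2"
proof (cases "poisson_median r = 0")
  case False
  then have "\<not> measure_pmf.prob (poisson_pmf r) {..poisson_median r - 1} \<ge> 1/2"
    unfolding poisson_median_def by (intro not_less_Least) simp
  moreover have "{..<poisson_median r} = {..poisson_median r - 1}"
    using False by auto
  ultimately show ?thesis
    by simp
qed simp

lemma prob_poisson_atMost_median:
  assumes "r > 0"
  shows "measure_pmf.prob (poisson_pmf r) {..poisson_median r} \<ge> 1/2"
  unfolding poisson_median_def
proof (rule LeastI_ex)
  from LIMSEQ_D[OF power_over_fact_tendsto_zero[of r], of "1/2"]
  obtain N where "norm (r ^ N / fact N - 0) < 1/2"
    by auto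
  then have small: "r ^ N / fact N < 1/2"
    by (metis abs_less_iff diff_zero real_norm_def)
  have "1 - measure_pmf.prob (poisson_pmf r) {..<N} \<le> r ^ N / fact N"
    using prob_poisson_atLeast_le[OF assms, of N] by (simp only: prob_poisson_atLeast)
  then have "measure_pmf.prob (poisson_pmf r) {..<N} \<ge> 1/2"
    using small by linarith
  also have "measure_pmf.prob (poisson_pmf r) {..<N} \<le> measure_pmf.prob (poisson_pmf r) {..N}"
    by (intro measure_pmf.finite_measure_mono) auto
  finally show "\<exists>N. measure_pmf.prob (poisson_pmf r) {..N} \<ge> 1/2" ..
qed

lemma exp_half_le_poisson_median:
  assumes "r > 0"
  shows "exp (r / 2) \<le> 2 ^ (poisson_median r + 1)"
proof -
  define M where "M = poisson_median r"
  have "1/2 \<le> exp (-r) * (\<Sum>k<Suc M. r ^ k / fact k)"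
    using prob_poisson_atMost_median[OF assms] prob_poisson_lessThan[OF assms, of "Suc M"]
    by (simp add: M_def lessThan_Suc_atMost)
  also have "(\<Sum>k<Suc M. r ^ k / fact k) \<le> (\<Sum>k<Suc M. 2 ^ M * ((r / 2) ^ k / fact k))"
  proof (rule sum_mono)
    fix k assume "k \<in> {..<Suc M}"
    then have "(2::real) ^ k \<le> 2 ^ M"
      by (intro power_increasing) auto
    moreover have "r ^ k / fact k = 2 ^ k * ((r / 2) ^ k / fact k)"
      by (simp add: power_divide)
    ultimately show "r ^ k / fact k \<le> 2 ^ M * ((r / 2) ^ k / fact k)"
      using assms
      by (metis mult_right_mono divide_nonneg_nonneg fact_ge_zero zero_le_power half_gt_zero less_imp_le)
  qed
  also have "\<dots> \<le> 2 ^ M * exp (r / 2)"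
    unfolding sum_distrib_left[symmetric] using assms
    by (intro mult_left_mono sum_power_over_fact_le_exp) auto
  finally have "1/2 \<le> exp (-r) * (2 ^ M * exp (r / 2))"
    by (simp add: mult_left_mono)
  also have "exp (-r) * (2 ^ M * exp (r / 2)) = 2 ^ M / exp (r / 2)"
    by (simp add: field_simps flip: exp_add)
  finally show ?thesis
    by (simp add: M_def field_simps)
qed

lemma poisson_median_at_top: "filterlim poisson_median at_top at_top"
  unfolding filterlim_at_top
proof
  fix Z :: nat
  show "eventually (\<lambda>r. Z \<le> poisson_median r) at_top"
    using eventually_gt_at_top[of "2 * (ln 2 * (real Z + 1))"] eventually_gt_at_top[of 0]
  proof eventually_elim
    case (elim r)
    have "r / 2 \<le> ln (2 ^ (poisson_median r + 1))"
      using exp_half_le_poisson_median[OF elim(2)] by (subst ln_ge_iff) auto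
    also have "\<dots> = ln 2 * real (poisson_median r + 1)"
      by (simp only: ln_realpow mult.commute)
    finally have "ln 2 * (real Z + 1) < ln 2 * real (poisson_median r + 1)"
      using elim(1) by linarith
    then have "real Z + 1 < real (poisson_median r + 1)"
      by (rule mult_left_less_imp_less) simp
    then show ?case
      by simp
  qed
qed

lemma prob_seq_thresh_keeps_null_le:
  assumes "i \<in> {1..n} - S" "m \<ge> 1" "\<theta>0 > 0" "\<theta>1 > 0"
  shows "measure_pmf.prob (obs_pmf n m K S \<theta>0 \<theta>1)
           {y. i \<in> seq_thresh n m (poisson_median (real m * \<theta>0)) y K} \<le> (1/2) ^ K"
  using assms prob_poisson_less_median[of "real m * \<theta>0"]
  by (simp add: prob_seq_thresh_keeps power_mono)

lemma prob_seq_thresh_drops_support_le: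
  assumes "i \<in> S" "S \<subseteq> {1..n}" "m \<ge> 1" "\<theta>0 > 0" "\<theta>1 > 0"
  shows "measure_pmf.prob (obs_pmf n m K S \<theta>0 \<theta>1) {y. i \<notin> seq_thresh n m thr y K}
       \<le> real K * ((real m * \<theta>1) ^ thr / fact thr)"
proof -
  let ?q = "measure_pmf.prob (poisson_pmf (real m * \<theta>1)) {..<thr}"
  have "measure_pmf.prob (obs_pmf n m K S \<theta>0 \<theta>1) {y. i \<notin> seq_thresh n m thr y K}
      = 1 - measure_pmf.prob (obs_pmf n m K S \<theta>0 \<theta>1) {y. i \<in> seq_thresh n m thr y K}"
    using measure_pmf.prob_compl[of "{y. i \<in> seq_thresh n m thr y K}"]
    by (simp add: Compl_eq_Diff_UNIV[symmetric] Collect_neg_eq)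
  also have "\<dots> = 1 - ?q ^ K"
    using assms by (auto simp: prob_seq_thresh_keeps)
  also have "\<dots> \<le> real K * (1 - ?q)"
    using Bernoulli_inequality[of "-(1 - ?q)" K] measure_pmf.prob_le_1[of _ "{..<thr}"]
    by (simp add: algebra_simps)
  also have "1 - ?q \<le> (real m * \<theta>1) ^ thr / fact thr"
    using prob_poisson_atLeast_le[of "real m * \<theta>1" thr] assms by (simp add: prob_poisson_atLeast)
  finally show ?thesis
    by (simp add: mult_left_mono)
qed

lemma prob_seq_thresh_error_le:
  assumes "S \<subseteq> {1..n}" "m \<ge> 1" "\<theta>0 > 0" "\<theta>1 > 0"
  defines "M \<equiv> poisson_median (real m * \<theta>0)"
  shows "measure_pmf.prob (obs_pmf n m K S \<theta>0 \<theta>1) {y. seq_thresh n m M y K \<noteq> S}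
       \<le> real n * (1/2) ^ K + real (card S) * real K * ((real m * \<theta>1) ^ M / fact M)"
proof -
  let ?P = "measure_pmf.prob (obs_pmf n m K S \<theta>0 \<theta>1)"
  let ?kept = "\<lambda>i. {y. i \<in> seq_thresh n m M y K}" and ?lost = "\<lambda>i. {y. i \<notin> seq_thresh n m M y K}"
  have "{y. seq_thresh n m M y K \<noteq> S} \<subseteq> (\<Union>i\<in>{1..n} - S. ?kept i) \<union> (\<Union>i\<in>S. ?lost i)"
    using assms(1) by (auto simp: seq_thresh_eq)
  then have "?P {y. seq_thresh n m M y K \<noteq> S} \<le> ?P (\<Union>i\<in>{1..n} - S. ?kept i) + ?P (\<Union>i\<in>S. ?lost i)"
    by (intro order_trans[OF measure_pmf.finite_measure_mono measure_Un_le]) auto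
  also have "\<dots> \<le> (\<Sum>i\<in>{1..n} - S. ?P (?kept i)) + (\<Sum>i\<in>S. ?P (?lost i))"
    using finite_subset[OF assms(1)]
    by (intro add_mono measure_pmf.finite_measure_subadditive_finite) auto
  also have "\<dots> \<le> (\<Sum>i\<in>{1..n} - S. (1/2) ^ K) + (\<Sum>i\<in>S. real K * ((real m * \<theta>1) ^ M / fact M))"
    using assms unfolding M_def
    by (intro add_mono sum_mono prob_seq_thresh_keeps_null_le prob_seq_thresh_drops_support_le) auto
  also have "\<dots> \<le> real n * (1/2) ^ K + real (card S) * real K * ((real m * \<theta>1) ^ M / fact M)"
    using card_mono[of "{1..n}" "{1..n} - S"] by (simp add: mult_right_mono mult.assoc)
  finally show ?thesis .
qed

lemma half_power_ceiling_log_le: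
  assumes "n \<ge> 1" "c \<ge> 0"
  shows "(1/2::real) ^ nat \<lceil>c * log 2 (real n)\<rceil> \<le> real n powr (-c)"
proof -
  let ?x = "c * log 2 (real n)"
  have "?x \<le> real (nat \<lceil>?x\<rceil>)"
    by linarith
  have "(1/2::real) ^ nat \<lceil>?x\<rceil> = 2 powr (- real (nat \<lceil>?x\<rceil>))"
    by (simp add: powr_minus powr_realpow power_one_over inverse_eq_divide)
  also have "\<dots> \<le> 2 powr (- ?x)"
    using \<open>?x \<le> real (nat \<lceil>?x\<rceil>)\<close> by (intro powr_mono) auto
  also have "\<dots> = (2 powr log 2 (real n)) powr (-c)"
    by (simp add: powr_powr algebra_simps)
  also have "\<dots> = real n powr (-c)"
    using assms by simp
  finally show ?thesis .
qed

lemma tendsto_mult_half_power_ceiling_log: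
  assumes "c > 1"
  shows "(\<lambda>n. real n * (1/2) ^ nat \<lceil>c * log 2 (real n)\<rceil>) \<longlonglongrightarrow> 0"
proof (rule tendsto_sandwich[of "\<lambda>_. 0" _ _ "\<lambda>n. real n * real n powr (-c)"])
  show "eventually (\<lambda>n. real n * (1/2) ^ nat \<lceil>c * log 2 (real n)\<rceil> \<le> real n * real n powr (-c)) sequentially"
    using eventually_ge_at_top[of 1]
    by eventually_elim (use assms in \<open>auto intro: mult_left_mono half_power_ceiling_log_le\<close>)
  show "(\<lambda>n. real n * real n powr (-c)) \<longlonglongrightarrow> 0"
    using assms by real_asymp
qed auto

lemma card_mult_ceiling_log_le_poisson_median:
  assumes "n \<ge> 2" "c \<ge> 0" "s \<ge> 1" "r > ln (real s * log 2 (real n)) + 1"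
  shows "real s * real (nat \<lceil>c * log 2 (real n)\<rceil>) \<le> 4 * (1 + c) * 4 ^ poisson_median r"
proof -
  define L where "L = log 2 (real n)"
  have "L \<ge> 1"
    using assms(1) by (simp add: L_def)
  then have sL: "real s * L \<ge> 1"
    using assms(3) by (metis mult_mono' of_nat_1 of_nat_le_iff mult_1 zero_le_one)
  have r_gt: "r > ln (real s * L) + 1"
    using assms(4) by (simp add: L_def)
  moreover have "ln (real s * L) \<ge> 0"
    using sL by simp
  ultimately have "r > 0"
    by linarith
  have "real (nat \<lceil>c * L\<rceil>) \<le> (1 + c) * L"
    using \<open>L \<ge> 1\<close> assms(2) by (simp add: algebra_simps) linarith
  then have "real s * real (nat \<lceil>c * L\<rceil>) \<le> (1 + c) * (real s * L)"
    by (metis mult_left_mono of_nat_0_le_iff mult.left_commute)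
  also have "real s * L = exp (ln (real s * L))"
    using sL by simp
  also have "\<dots> \<le> exp r"
    using r_gt by simp
  also have "exp r = exp (r / 2) * exp (r / 2)"
    by (simp flip: exp_add)
  also have "\<dots> \<le> 2 ^ (poisson_median r + 1) * 2 ^ (poisson_median r + 1)"
    using exp_half_le_poisson_median[OF \<open>r > 0\<close>] by (intro mult_mono) auto
  also have "\<dots> = 4 * 4 ^ poisson_median r"
    by (simp add: power_add flip: power_mult_distrib)
  finally have "real s * real (nat \<lceil>c * L\<rceil>) \<le> (1 + c) * (4 * 4 ^ poisson_median r)"
    using assms(2) by (simp add: mult_left_mono)
  then show ?thesis
    by (simp only: L_def ac_simps)
qed

lemma tendsto_support_miss_bound_zero:
  fixes s :: "nat \<Rightarrow> nat" and r :: "nat \<Rightarrow> real"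
  assumes "\<mu> > 0" "c \<ge> 0"
    and growth: "eventually (\<lambda>n. r n > ln (real (s n) * log 2 (real n)) + 1) sequentially"
  shows "(\<lambda>n. real (s n) * real (nat \<lceil>c * log 2 (real n)\<rceil>)
              * (\<mu> ^ poisson_median (r n) / fact (poisson_median (r n)))) \<longlonglongrightarrow> 0"
    (is "?t \<longlonglongrightarrow> 0")
proof -
  \<comment> \<open>r' agrees with r eventually wherever s n > 0, and unlike r it tends to infinity;
    where s n = 0 the term vanishes anyway.\<close>
  define r' where "r' n = max (r n) (ln (log 2 (real n)))" for n
  define a where "a M = (4 * \<mu>) ^ M / fact M" for M
  have "filterlim (\<lambda>n. ln (log 2 (real n))) at_top sequentially"
    by real_asymp
  then have "filterlim r' at_top sequentially"
    by (rule filterlim_at_top_mono) (simp add: r'_def)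
  then have "filterlim (\<lambda>n. poisson_median (r' n)) at_top sequentially"
    by (rule filterlim_compose[OF poisson_median_at_top])
  then have "(\<lambda>n. a (poisson_median (r' n))) \<longlonglongrightarrow> 0"
    unfolding a_def by (rule filterlim_compose[OF power_over_fact_tendsto_zero])
  then have lim: "(\<lambda>n. 4 * (1 + c) * a (poisson_median (r' n))) \<longlonglongrightarrow> 0"
    by (rule tendsto_mult_right_zero)
  have bound: "eventually (\<lambda>n. ?t n \<le> 4 * (1 + c) * a (poisson_median (r' n))) sequentially"
    using growth eventually_ge_at_top[of 2]
  proof eventually_elim
    case (elim n)
    show ?case
    proof (cases "s n = 0")
      case True
      then show ?thesis
        using assms by (simp add: a_def)
    next
      case False
      have "ln (log 2 (real n)) \<le> ln (real (s n) * log 2 (real n))"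
        using False elim(2) by (subst ln_le_cancel_iff) auto
      then have "r' n = r n"
        using elim(1) by (simp add: r'_def)
      have "?t n \<le> 4 * (1 + c) * 4 ^ poisson_median (r n)
          * (\<mu> ^ poisson_median (r n) / fact (poisson_median (r n)))"
        using card_mult_ceiling_log_le_poisson_median[of n c "s n" "r n"] False elim assms
        by (intro mult_right_mono) simp_all
      then show ?thesis
        by (simp add: \<open>r' n = r n\<close> a_def power_mult_distrib)
    qed
  qed
  have nonneg: "eventually (\<lambda>n. 0 \<le> ?t n) sequentially"
    using assms by simp
  show ?thesis
    by (rule tendsto_sandwich[OF nonneg bound tendsto_const lim])
qed

theorem corollary6:
  fixes m :: nat and \<epsilon> :: real and \<theta>1 :: real
    and \<theta>0 :: "nat \<Rightarrow> real" and S :: "nat \<Rightarrow> nat set"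
  assumes m_pos: "m \<ge> 1"
    and eps_pos: "\<epsilon> > 0"
    and theta1_pos: "\<theta>1 > 0"
    and theta0_gt: "\<And>n. \<theta>0 n > \<theta>1"
    and S_sub: "\<And>n. S n \<subseteq> {1..n}"
    and growth: "eventually (\<lambda>n. \<theta>0 n > (ln (real (card (S n)) * log 2 (real n)) + 1) / real m) at_top"
  shows "(\<lambda>n. let K = nat \<lceil>(1 + \<epsilon>) * log 2 (real n)\<rceil> in
            measure_pmf.prob (obs_pmf n m K (S n) (\<theta>0 n) \<theta>1)
              {y. seq_thresh n m (poisson_median (real m * \<theta>0 n)) y K \<noteq> S n})
         \<longlonglongrightarrow> 0"
proof (rule tendsto_sandwich[OF _ _ tendsto_const tendsto_add_zero])
  define K where "K n = nat \<lceil>(1 + \<epsilon>) * log 2 (real n)\<rceil>" for n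
  define M where "M n = poisson_median (real m * \<theta>0 n)" for n
  have theta0_pos: "\<theta>0 n > 0" for n
    using theta0_gt[of n] theta1_pos by linarith
  show "eventually (\<lambda>n. (let K = nat \<lceil>(1 + \<epsilon>) * log 2 (real n)\<rceil> in
            measure_pmf.prob (obs_pmf n m K (S n) (\<theta>0 n) \<theta>1)
              {y. seq_thresh n m (poisson_median (real m * \<theta>0 n)) y K \<noteq> S n})
      \<le> real n * (1/2) ^ K n + real (card (S n)) * real (K n) * ((real m * \<theta>1) ^ M n / fact (M n))) sequentially"
    unfolding K_def M_def Let_def
    by (intro always_eventually allI prob_seq_thresh_error_le S_sub m_pos theta0_pos theta1_pos)
  show "(\<lambda>n. real n * (1/2) ^ K n) \<longlonglongrightarrow> 0"
    unfolding K_def using eps_pos by (intro tendsto_mult_half_power_ceiling_log) simp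
  have "eventually (\<lambda>n. real m * \<theta>0 n > ln (real (card (S n)) * log 2 (real n)) + 1) sequentially"
    using growth by eventually_elim (use m_pos in \<open>simp add: field_simps\<close>)
  then show "(\<lambda>n. real (card (S n)) * real (K n) * ((real m * \<theta>1) ^ M n / fact (M n))) \<longlonglongrightarrow> 0"
    unfolding K_def M_def using eps_pos m_pos theta1_pos
    by (intro tendsto_support_miss_bound_zero) auto
qed (simp add: Let_def)

end
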